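(* Let $n \geq 2$, $x \in \mathbb{R}^{n+1}$ with $|x| < 1$, and $\alpha \geq -n$. Then the weighted manifold $(S^n, g, \mu_x^{n,\alpha})$ satisfies the Curvature-Dimension condition $CD\left(n-1-\frac{n+\alpha}{4}, -\alpha\right)$.
   Context: $S^n \subset \mathbb{R}^{n+1}$ is the unit sphere with its canonical Riemannian metric $g$ (induced from the Euclidean metric $|\cdot|$ on $\mathbb{R}^{n+1}$), and $\sigma^n$ is the rotation-invariant (Haar) probability measure on $S^n$. For $n\ge 2$, $|x|<1$ and $\alpha\in\mathbb{R}$, $\mu_x^{n,\alpha}$ is the probability measure on $S^n$ given by $d\mu_x^{n,\alpha}(y) = \frac{c_x^{n,\alpha}}{|y-x|^{n+\alpha}}\, d\sigma^n(y)$, where $c_x^{n,\alpha}>0$ is the normalizing constant. Curvature-Dimension condition (tensorial definition): Let $(M^n,g)$ be a closed connected Riemannian manifold and $\mu$ a measure on $M$ with positive $C^2$ density $\Psi$ with respect to the Riemannian volume measure (equivalently, any constant multiple of it, e.g. with respect to $\sigma^n$ on the sphere). For $N \in (-\infty,\infty]$ define $\mathrm{Ric}_{g,\mu,N} := \mathrm{Ric}_g - \nabla_g^2 \log \Psi - \frac{1}{N-n} \nabla_g \log\Psi \otimes \nabla_g \log \Psi$, with conventions $1/\infty = 0$, $1/0 = +\infty$, $\infty\cdot 0 = 0$. For $\rho\in\mathbb{R}$, $(M,g,\mu)$ satisfies $CD(\rho,N)$ if $\mathrm{Ric}_{g,\mu,N} \geq \rho\, g$ as symmetric 2-tensors everywhere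 on $M$. (This tensorial definition is used for all $N$, including $N\in[0,n)$.) *)

theory Defs
  imports "HOL-Analysis.Analysis"
begin

text \<open>Unit sphere S^n in R^(n+1), where R^(n+1) is modelled as real^'n with CARD('n) = n+1.\<close>

definition sdim :: "'n::finite itself \<Rightarrow> real" where
  "sdim _ = real CARD('n) - 1"

definition geod :: "real^'n \<Rightarrow> real^'n \<Rightarrow> real \<Rightarrow> real^'n" where
  "geod y v t = cos (t * norm v) *\<^sub>R y + sin (t * norm v) *\<^sub>R (v /\<^sub>R norm v)"

definition sph_diff :: "(real^'n \<Rightarrow> real) \<Rightarrow> real^'n \<Rightarrow> real^'n \<Rightarrow> real" where
  "sph_diff f y v = deriv (\<lambda>t. f (geod y v t)) 0"

definition sph_hess :: "(real^'n \<Rightarrow> real) \<Rightarrow> real^'n \<Rightarrow> real^'n \<Rightarrow> real" where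
  "sph_hess f y v = deriv (\<lambda>t. deriv (\<lambda>s. f (geod y v s)) t) 0"

definition sph_ric :: "'n::finite itself \<Rightarrow> real^'n \<Rightarrow> real" where
  "sph_ric T v = (sdim T - 1) * (norm v)\<^sup>2"

text \<open>The coefficient 1/(N-n) with conventions 1/infinity = 0 and 1/0 = +infinity.\<close>

definition cd_coef :: "'n::finite itself \<Rightarrow> ereal \<Rightarrow> ereal" where
  "cd_coef T N = (if N = \<infinity> \<or> N = -\<infinity> then 0
                  else if real_of_ereal N = sdim T then \<infinity>
                  else ereal (1 / (real_of_ereal N - sdim T)))"

text \<open>Weighted Ricci tensor Ric_{g,mu,N}(v,v) for the measure with density Psi (w.r.t. sigma^n);
  ereal multiplication has infinity * 0 = 0.\<close>

definition weighted_ric :: "ereal \<Rightarrow> (real^'n \<Rightarrow> real) \<Rightarrow> real^'n \<Rightarrow> real^'n \<Rightarrow> ereal" where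
  "weighted_ric N \<Psi> y v =
     ereal (sph_ric TYPE('n) v - sph_hess (\<lambda>z. ln (\<Psi> z)) y v)
     - cd_coef TYPE('n) N * ereal ((sph_diff (\<lambda>z. ln (\<Psi> z)) y v)\<^sup>2)"

text \<open>CD(rho,N) for (S^n, g, Psi sigma^n): Psi positive on S^n and Ric_{g,mu,N} >= rho g as
  quadratic forms on every tangent space T_y S^n = {v. v . y = 0}.\<close>

definition CD_sphere :: "real \<Rightarrow> ereal \<Rightarrow> (real^'n \<Rightarrow> real) \<Rightarrow> bool" where
  "CD_sphere \<rho> N \<Psi> \<longleftrightarrow>
     (\<forall>y\<in>sphere 0 1. \<Psi> y > 0) \<and>
     (\<forall>y\<in>sphere 0 1. \<forall>v. v \<bullet> y = 0 \<longrightarrow> weighted_ric N \<Psi> y v \<ge> ereal (\<rho> * (norm v)\<^sup>2))"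

end

theory Submission
  imports Defs
begin

text \<open>
  Along the great circle \<open>\<gamma>(t) = cos(t|v|) y + sin(t|v|) v/|v|\<close> the squared chordal distance
  \<open>h(t) = |\<gamma>(t) - x|\<^sup>2\<close> is a trigonometric polynomial, and \<open>ln \<Psi> = ln c - \<beta> ln h\<close> with
  \<open>\<beta> = (n + \<alpha>)/2\<close>. Differentiating at \<open>t = 0\<close> gives \<open>d ln \<Psi>(v) = 2\<beta> (x\<cdot>v)/D\<close> and
  \<open>Hess ln \<Psi>(v,v) = 2\<beta> (2(x\<cdot>v)\<^sup>2 - |v|\<^sup>2 (x\<cdot>y) D)/D\<^sup>2\<close>, where \<open>D = |y - x|\<^sup>2 = 1 + |x|\<^sup>2 - 2 x\<cdot>y\<close>.
  As \<open>N - n = -2\<beta>\<close>, the excess of \<open>Ric\<^sub>N(v,v)\<close> over \<open>(n - 1 - \<beta>/2)|v|\<^sup>2\<close> is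
  \<open>\<beta> (|v|\<^sup>2 D\<^sup>2 + 4|v|\<^sup>2 (x\<cdot>y) D - 4(x\<cdot>v)\<^sup>2)/(2D\<^sup>2)\<close>, and by Bessel's inequality
  \<open>(x\<cdot>y)\<^sup>2|v|\<^sup>2 + (x\<cdot>v)\<^sup>2 \<le> |x|\<^sup>2|v|\<^sup>2\<close> its numerator is at least \<open>|v|\<^sup>2 (1 - |x|\<^sup>2)\<^sup>2\<close>.
\<close>

lemma norm_geod:
  fixes y v :: "real^'n"
  assumes "norm y = 1" and "v \<bullet> y = 0"
  shows "norm (geod y v t) = 1"
proof (cases "v = 0")
  case True
  then show ?thesis using assms by (simp add: geod_def)
next
  case False
  define u where "u = v /\<^sub>R norm v"
  have "u \<bullet> u = 1" "u \<bullet> y = 0" "y \<bullet> y = 1"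
    using assms False by (simp_all add: u_def power2_norm_eq_inner[symmetric])
  then have "geod y v t \<bullet> geod y v t = (cos (t * norm v))\<^sup>2 + (sin (t * norm v))\<^sup>2"
    unfolding geod_def u_def[symmetric]
    by (simp add: inner_add_left inner_add_right inner_commute power2_eq_square)
  then show ?thesis by (simp add: norm_eq_sqrt_inner)
qed

lemma norm_geod_minus_sq:
  fixes x y v :: "real^'n"
  assumes "norm y = 1" and "v \<bullet> y = 0"
  shows "(norm (geod y v t - x))\<^sup>2 =
    1 + (norm x)\<^sup>2 - 2 * ((x \<bullet> y) * cos (t * norm v) + (x \<bullet> (v /\<^sub>R norm v)) * sin (t * norm v))"
proof -
  have "(norm (geod y v t - x))\<^sup>2 = (norm (geod y v t))\<^sup>2 + (norm x)\<^sup>2 - 2 * (x \<bullet> geod y v t)"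
    by (simp add: power2_norm_eq_inner inner_diff_left inner_diff_right inner_commute)
  then show ?thesis
    using norm_geod[OF assms] by (simp add: geod_def inner_add_right)
qed

lemma deriv_const_minus_ln:
  fixes h h' :: "real \<Rightarrow> real"
  assumes "\<And>t. (h has_real_derivative h' t) (at t)" and "\<And>t. h t > 0"
  shows "deriv (\<lambda>t. L - \<beta> * ln (h t)) = (\<lambda>t. - \<beta> * h' t / h t)"
proof
  fix t
  have "((\<lambda>t. L - \<beta> * ln (h t)) has_real_derivative - \<beta> * h' t / h t) (at t)"
    using assms[of t] by (auto intro!: derivative_eq_intros simp: field_simps)
  then show "deriv (\<lambda>t. L - \<beta> * ln (h t)) t = - \<beta> * h' t / h t"
    by (rule DERIV_imp_deriv)
qed

lemma deriv2_const_minus_ln: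
  fixes h h' h'' :: "real \<Rightarrow> real"
  assumes "\<And>t. (h has_real_derivative h' t) (at t)"
    and "\<And>t. (h' has_real_derivative h'' t) (at t)" and "\<And>t. h t > 0"
  shows "deriv (\<lambda>t. deriv (\<lambda>t. L - \<beta> * ln (h t)) t) s = - \<beta> * (h'' s * h s - (h' s)\<^sup>2) / (h s)\<^sup>2"
proof -
  have "((\<lambda>t. - \<beta> * h' t / h t) has_real_derivative - \<beta> * (h'' s * h s - (h' s)\<^sup>2) / (h s)\<^sup>2) (at s)"
    using assms(1,2)[of s] assms(3)[of s]
    by (auto intro!: derivative_eq_intros simp: field_simps power2_eq_square)
  then show ?thesis
    unfolding deriv_const_minus_ln[OF assms(1,3)] by (rule DERIV_imp_deriv)
qed

lemma inner_sq_add_inner_sq_le: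
  fixes x y v :: "'a::real_inner"
  assumes "norm y = 1" and "v \<bullet> y = 0"
  shows "(x \<bullet> y)\<^sup>2 * (norm v)\<^sup>2 + (x \<bullet> v)\<^sup>2 \<le> (norm x)\<^sup>2 * (norm v)\<^sup>2"
proof -
  define z where "z = x - (x \<bullet> y) *\<^sub>R y"
  have "y \<bullet> y = 1"
    using assms(1) by (simp add: power2_norm_eq_inner[symmetric])
  then have z_sq: "(norm z)\<^sup>2 = (norm x)\<^sup>2 - (x \<bullet> y)\<^sup>2"
    unfolding power2_norm_eq_inner z_def
    by (simp add: inner_diff_left inner_diff_right inner_commute power2_eq_square)
  have "(x \<bullet> v)\<^sup>2 = (z \<bullet> v)\<^sup>2"
    using assms(2) by (simp add: z_def inner_diff_left inner_diff_right inner_commute)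
  also have "\<dots> \<le> (norm z)\<^sup>2 * (norm v)\<^sup>2"
    by (metis Cauchy_Schwarz_ineq2 abs_le_square_iff power_mult_distrib abs_mult abs_norm_cancel)
  finally show ?thesis
    unfolding z_sq by (simp add: algebra_simps)
qed

lemma sph_derivs_ln_chordal_density:
  fixes x y v :: "real^'n" and c \<beta> :: real
  assumes "norm x < 1" and "norm y = 1" and "v \<bullet> y = 0" and "c > 0"
  defines "\<Psi> \<equiv> \<lambda>z. c / norm (z - x) powr (2 * \<beta>)" and "D \<equiv> (norm (y - x))\<^sup>2"
  shows "sph_diff (\<lambda>z. ln (\<Psi> z)) y v = 2 * \<beta> * (x \<bullet> v) / D"
    and "sph_hess (\<lambda>z. ln (\<Psi> z)) y v =
           2 * \<beta> * (2 * (x \<bullet> v)\<^sup>2 - (norm v)\<^sup>2 * (x \<bullet> y) * D) / D\<^sup>2"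
proof -
  define w a b where "w = norm v" and "a = x \<bullet> y" and "b = x \<bullet> (v /\<^sub>R norm v)"
  define h where "h t = 1 + (norm x)\<^sup>2 - 2 * (a * cos (t * w) + b * sin (t * w))" for t
  define h' where "h' t = 2 * w * (a * sin (t * w) - b * cos (t * w))" for t
  define h'' where "h'' t = 2 * w\<^sup>2 * (a * cos (t * w) + b * sin (t * w))" for t
  have h_eq: "h t = (norm (geod y v t - x))\<^sup>2" for t
    using norm_geod_minus_sq[OF assms(2,3)] by (simp add: h_def w_def a_def b_def)
  have geod_ne: "geod y v t \<noteq> x" for t
    using norm_geod[OF assms(2,3)] assms(1) by auto
  then have h_pos: "h t > 0" for t
    by (simp add: h_eq)
  have h_deriv: "(h has_real_derivative h' t) (at t)" for t
    unfolding h_def h'_def by (auto intro!: derivative_eq_intros simp: algebra_simps)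
  have h'_deriv: "(h' has_real_derivative h'' t) (at t)" for t
    unfolding h'_def h''_def by (auto intro!: derivative_eq_intros simp: algebra_simps power2_eq_square)
  have ln_\<Psi>: "(\<lambda>t. ln (\<Psi> (geod y v t))) = (\<lambda>t. ln c - \<beta> * ln (h t))"
  proof
    fix t
    show "ln (\<Psi> (geod y v t)) = ln c - \<beta> * ln (h t)"
      using geod_ne[of t] assms(4)
      by (simp add: \<Psi>_def h_eq ln_div ln_realpow)
  qed
  have wb: "w * b = x \<bullet> v"
    by (cases "v = 0") (simp_all add: w_def b_def)
  have at_0: "h 0 = D" "h' 0 = - 2 * (x \<bullet> v)" "h'' 0 = 2 * w\<^sup>2 * a"
    using h_eq[of 0] wb by (simp_all add: geod_def D_def h'_def h''_def)
  show "sph_diff (\<lambda>z. ln (\<Psi> z)) y v = 2 * \<beta> * (x \<bullet> v) / D"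
    unfolding sph_diff_def ln_\<Psi> deriv_const_minus_ln[OF h_deriv h_pos] at_0 by simp
  show "sph_hess (\<lambda>z. ln (\<Psi> z)) y v =
          2 * \<beta> * (2 * (x \<bullet> v)\<^sup>2 - (norm v)\<^sup>2 * (x \<bullet> y) * D) / D\<^sup>2"
    unfolding sph_hess_def ln_\<Psi> deriv2_const_minus_ln[OF h_deriv h'_deriv h_pos] at_0
    by (simp add: w_def a_def algebra_simps power2_eq_square)
qed

lemma chordal_ricci_ineq:
  fixes \<beta> a p q D X :: real
  assumes "\<beta> > 0" and "q \<ge> 0" and "D = 1 + X - 2 * a" and "D > 0"
    and "a\<^sup>2 * q + p\<^sup>2 \<le> X * q"
  shows "(m - 1 - \<beta> / 2) * q \<le>
           (m - 1) * q - 2 * \<beta> * (2 * p\<^sup>2 - q * a * D) / D\<^sup>2 + (2 * \<beta> * p / D)\<^sup>2 / (2 * \<beta>)"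
proof -
  have "q * D\<^sup>2 + 4 * q * a * D - 4 * p\<^sup>2 = q * (1 + X)\<^sup>2 - 4 * (a\<^sup>2 * q + p\<^sup>2)"
    unfolding assms(3) by (simp add: algebra_simps power2_eq_square)
  also have "\<dots> \<ge> q * (1 + X)\<^sup>2 - 4 * (X * q)"
    using assms(5) by simp
  moreover have "q * (1 + X)\<^sup>2 - 4 * (X * q) = q * (1 - X)\<^sup>2"
    by (simp add: algebra_simps power2_eq_square)
  ultimately have key: "0 \<le> q * D\<^sup>2 + 4 * q * a * D - 4 * p\<^sup>2"
    using assms(2) by (metis zero_le_mult_iff zero_le_power2 order.trans)
  have "(m - 1) * q - 2 * \<beta> * (2 * p\<^sup>2 - q * a * D) / D\<^sup>2 + (2 * \<beta> * p / D)\<^sup>2 / (2 * \<beta>)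
          - (m - 1 - \<beta> / 2) * q = \<beta> * (q * D\<^sup>2 + 4 * q * a * D - 4 * p\<^sup>2) / (2 * D\<^sup>2)"
    using assms(1,4) by (simp add: field_simps power2_eq_square)
  also have "\<dots> \<ge> 0"
    using key assms(1) by simp
  finally show ?thesis by simp
qed

lemma weighted_ric_chordal_density_ge:
  fixes x y v :: "real^'n" and c \<beta> :: real
  assumes "norm x < 1" and "norm y = 1" and "v \<bullet> y = 0" and "c > 0" and "\<beta> \<ge> 0"
  shows "ereal ((sdim TYPE('n) - 1 - \<beta> / 2) * (norm v)\<^sup>2) \<le>
           weighted_ric (ereal (sdim TYPE('n) - 2 * \<beta>)) (\<lambda>z. c / norm (z - x) powr (2 * \<beta>)) y v"
proof -
  define D where "D = (norm (y - x))\<^sup>2"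
  note derivs = sph_derivs_ln_chordal_density[OF assms(1-4), of \<beta>, folded D_def]
  have ric: "sph_ric TYPE('n) v = (sdim TYPE('n) - 1) * (norm v)\<^sup>2"
    by (simp add: sph_ric_def)
  show ?thesis
  proof (cases "\<beta> = 0")
    case True
    \<comment> \<open>Here \<open>N = n\<close>, so the coefficient is \<open>\<infinity>\<close>; it multiplies \<open>(d ln \<Psi>)\<^sup>2 = 0\<close>, and \<open>\<infinity> * 0 = 0\<close>.\<close>
    then show ?thesis
      unfolding weighted_ric_def derivs ric by (simp add: cd_coef_def)
  next
    case False
    then have "\<beta> > 0" using assms(5) by simp
    have "y \<bullet> y = 1"
      using assms(2) by (simp add: power2_norm_eq_inner[symmetric])
    then have D_eq: "D = 1 + (norm x)\<^sup>2 - 2 * (x \<bullet> y)"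
      unfolding D_def power2_norm_eq_inner
      by (simp add: inner_diff_left inner_diff_right inner_commute)
    have "D > 0"
      using assms(1,2) by (auto simp: D_def)
    have "cd_coef TYPE('n) (ereal (sdim TYPE('n) - 2 * \<beta>)) = ereal (- 1 / (2 * \<beta>))"
      using \<open>\<beta> > 0\<close> by (simp add: cd_coef_def)
    then show ?thesis
      using chordal_ricci_ineq[OF \<open>\<beta> > 0\<close> _ D_eq \<open>D > 0\<close> inner_sq_add_inner_sq_le[OF assms(2,3)], of "sdim TYPE('n)"]
      unfolding weighted_ric_def derivs ric by simp
  qed
qed

theorem theorem1p1:
  fixes x :: "real^'n" and \<alpha> c :: real
  assumes "CARD('n) \<ge> 3"
    and "norm x < 1"
    and "\<alpha> \<ge> - sdim TYPE('n)"
    and "c > 0"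
  shows "CD_sphere (sdim TYPE('n) - 1 - (sdim TYPE('n) + \<alpha>) / 4) (ereal (- \<alpha>))
           (\<lambda>y. c / norm (y - x) powr (sdim TYPE('n) + \<alpha>))"
proof -
  \<comment> \<open>The bound holds in every dimension.\<close>
  define \<beta> where "\<beta> = (sdim TYPE('n) + \<alpha>) / 2"
  have "\<beta> \<ge> 0"
    using assms(3) by (simp add: \<beta>_def)
  have params: "sdim TYPE('n) + \<alpha> = 2 * \<beta>" "- \<alpha> = sdim TYPE('n) - 2 * \<beta>"
    "sdim TYPE('n) - 1 - (sdim TYPE('n) + \<alpha>) / 4 = sdim TYPE('n) - 1 - \<beta> / 2"
    by (simp_all add: \<beta>_def field_simps)
  have "c / norm (y - x) powr (2 * \<beta>) > 0" if "y \<in> sphere 0 1" for y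
  proof -
    have "y \<noteq> x"
      using that assms(2) by auto
    then show ?thesis
      using assms(4) by simp
  qed
  then show ?thesis
    unfolding CD_sphere_def params
    using weighted_ric_chordal_density_ge[OF assms(2) _ _ assms(4) \<open>\<beta> \<ge> 0\<close>] by simp
qed

end
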